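(* Let $\mathbf{t}\in\mathrm{Sym}^2(\mathbb{R}^3)$ be transversely isotropic and $\mathbf{H}\in\mathbb{H}^4$. Then the pair $(\mathbf{H},\mathbf{t})$ is trigonal, tetragonal or transversely isotropic iff the triple $(\mathbf{d}_2,\mathbf{t},\mathbf{H}:\mathbf{t})$ is transversely isotropic.
   Context: $\mathbb{H}^4$ is the space of totally symmetric traceless fourth-order tensors on $\mathbb{R}^3$, with $SO(3)$-action $(g\star\mathbf{T})(x_1,\dots,x_n)=\mathbf{T}(g^{-1}x_1,\dots,g^{-1}x_n)$. $(\mathbf{H}:\mathbf{H})_{ijkl}=H_{ijmn}H_{mnkl}$, $(\mathbf{H}:\mathbf{a})_{ij}=H_{ijkl}a_{kl}$, $(\operatorname{tr}_{13}\mathbf{A})_{ij}=A_{kikj}$, $\mathbf{d}_2=\operatorname{tr}_{13}(\mathbf{H}:\mathbf{H})$. Symmetry group of a family: intersection of $\{g:g\star\mathbf{T}=\mathbf{T}\}$; class: conjugacy class. Transversely isotropic $=[O(2)]$, tetragonal $=[\mathbb{D}_4]$, trigonal $=[\mathbb{D}_3]$ ($O(2)$: rotations about the $z$-axis and the rotation by $\pi$ about the $x$-axis; $\mathbb{D}_n$ generated by the rotation by $2\pi/n$ about the $z$-axis and the rotation by $\pi$ about the $x$-axis). *)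

theory Defs
  imports "HOL-Analysis.Analysis"
begin

text \<open>Tensors on R^3 in components w.r.t. the standard basis, indices of type 3
  (index 1 = x, 2 = y, 3 = z).\<close>

type_synonym tensor2 = "3 \<Rightarrow> 3 \<Rightarrow> real"
type_synonym tensor4 = "3 \<Rightarrow> 3 \<Rightarrow> 3 \<Rightarrow> 3 \<Rightarrow> real"
type_synonym mat3 = "real^3^3"

definition SO3 :: "mat3 set" where
  "SO3 = {g. orthogonal_matrix g \<and> det g = 1}"

definition act2 :: "mat3 \<Rightarrow> tensor2 \<Rightarrow> tensor2" where
  "act2 g a = (\<lambda>i j. \<Sum>p\<in>UNIV. \<Sum>q\<in>UNIV. g$i$p * g$j$q * a p q)"

definition act4 :: "mat3 \<Rightarrow> tensor4 \<Rightarrow> tensor4" where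
  "act4 g H = (\<lambda>i j k l. \<Sum>p\<in>UNIV. \<Sum>q\<in>UNIV. \<Sum>r\<in>UNIV. \<Sum>s\<in>UNIV.
       g$i$p * g$j$q * g$k$r * g$l$s * H p q r s)"

definition is_Sym2 :: "tensor2 \<Rightarrow> bool" where
  "is_Sym2 a \<longleftrightarrow> (\<forall>i j. a i j = a j i)"

text \<open>Totally symmetric (invariance under the transpositions (12),(23),(34),
  which generate all permutations) and traceless.\<close>
definition is_H4 :: "tensor4 \<Rightarrow> bool" where
  "is_H4 H \<longleftrightarrow>
     (\<forall>i j k l. H i j k l = H j i k l \<and> H i j k l = H i k j l \<and> H i j k l = H i j l k)
     \<and> (\<forall>i j. (\<Sum>k\<in>UNIV. H k k i j) = 0)"

definition ddot44 :: "tensor4 \<Rightarrow> tensor4 \<Rightarrow> tensor4" where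
  "ddot44 H K = (\<lambda>i j k l. \<Sum>m\<in>UNIV. \<Sum>n\<in>UNIV. H i j m n * K m n k l)"

definition ddot42 :: "tensor4 \<Rightarrow> tensor2 \<Rightarrow> tensor2" where
  "ddot42 H a = (\<lambda>i j. \<Sum>k\<in>UNIV. \<Sum>l\<in>UNIV. H i j k l * a k l)"

definition tr13 :: "tensor4 \<Rightarrow> tensor2" where
  "tr13 A = (\<lambda>i j. \<Sum>k\<in>UNIV. A k i k j)"

definition d2 :: "tensor4 \<Rightarrow> tensor2" where
  "d2 H = tr13 (ddot44 H H)"

definition stab2 :: "tensor2 \<Rightarrow> mat3 set" where
  "stab2 a = {g \<in> SO3. act2 g a = a}"

definition stab4 :: "tensor4 \<Rightarrow> mat3 set" where
  "stab4 H = {g \<in> SO3. act4 g H = H}"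

definition rotz :: "real \<Rightarrow> mat3" where
  "rotz th = vector [vector [cos th, - sin th, 0], vector [sin th, cos th, 0], vector [0, 0, 1]]"

definition rotx_pi :: mat3 where
  "rotx_pi = vector [vector [1, 0, 0], vector [0, -1, 0], vector [0, 0, -1]]"

definition O2 :: "mat3 set" where
  "O2 = range rotz \<union> (\<lambda>th. rotz th ** rotx_pi) ` UNIV"

definition Dn :: "nat \<Rightarrow> mat3 set" where
  "Dn n = (\<lambda>k. rotz (2 * pi * real k / real n)) ` {..<n}
        \<union> (\<lambda>k. rotz (2 * pi * real k / real n) ** rotx_pi) ` {..<n}"

definition in_class :: "mat3 set \<Rightarrow> mat3 set \<Rightarrow> bool" where
  "in_class G K \<longleftrightarrow> (\<exists>g\<in>SO3. G = (\<lambda>k. g ** k ** transpose g) ` K)"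

end

theory Submission
  imports Defs
begin

text \<open>
  In a frame adapted to \<open>t\<close>, \<open>t = diag(a, a, b)\<close> with \<open>a \<noteq> b\<close> and its symmetry group is O(2);
  as \<open>d\<^sub>2\<close> and \<open>H : t\<close> are equivariant, all symmetry groups can be computed in this frame, inside
  O(2). Under a rotation by \<open>th\<close> about the z-axis the off-axis and the deviatoric in-plane parts of a
  symmetric second-order tensor turn by \<open>th\<close> and \<open>2 th\<close>, so a tensor fixed by a rotation of order 3
  or 4 is transversely isotropic. Every group of class \<open>[D\<^sub>3]\<close>, \<open>[D\<^sub>4]\<close> or \<open>[O(2)]\<close> contains
  such a rotation, which gives one direction.

  Conversely, \<open>H\<close> is traceless, so \<open>H : t = (b - a) H : (e\<^sub>3 \<otimes> e\<^sub>3)\<close>, and transverse isotropy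
  of \<open>H : t\<close> puts \<open>H\<close> into a normal form with parameters \<open>e\<close> real and \<open>w\<close>, \<open>z\<close> complex, on
  which the rotation by \<open>th\<close> acts by \<open>w \<mapsto> cis (4 th) w\<close>, \<open>z \<mapsto> cis (3 th) z\<close>. The off-axis
  part of \<open>d\<^sub>2\<close> is \<open>w * cnj z\<close>; if it vanishes, then \<open>w = 0\<close> or \<open>z = 0\<close> and, after a rotation
  about the z-axis, the symmetry group of \<open>H\<close> within O(2) is O(2), \<open>D\<^sub>4\<close> or \<open>D\<^sub>3\<close>.
\<close>

lemma orthogonal_matrix_columns_orthonormal:
  assumes "orthogonal_matrix g"
  shows "(\<Sum>m\<in>UNIV. g$m$a * g$m$b) = (if a = b then 1 else (0::real))"
proof -
  have "(transpose g ** g) $ a $ b = mat 1 $ a $ b"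
    using assms by (simp add: orthogonal_matrix_def)
  thus ?thesis by (simp add: matrix_matrix_mult_def transpose_def mat_def)
qed

lemma sum_orthogonal_contract:
  assumes "orthogonal_matrix g"
  shows "(\<Sum>k\<in>UNIV. \<Sum>r\<in>UNIV. \<Sum>a\<in>UNIV. (g$k$r * g$k$a) * z r a) = (\<Sum>r\<in>UNIV. (z r r::real))"
proof -
  have "(\<Sum>k\<in>UNIV. \<Sum>r\<in>UNIV. \<Sum>a\<in>UNIV. (g$k$r * g$k$a) * z r a)
       = (\<Sum>r\<in>UNIV. \<Sum>a\<in>UNIV. (\<Sum>k\<in>UNIV. g$k$r * g$k$a) * z r a)"
    by (subst sum.swap, rule sum.cong[OF refl], subst sum.swap) (simp add: sum_distrib_right)
  also have "\<dots> = (\<Sum>r\<in>UNIV. z r r)"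
    by (simp add: orthogonal_matrix_columns_orthonormal[OF assms] if_distrib[of "\<lambda>c. c * _"] sum.delta cong: if_cong)
  finally show ?thesis .
qed

lemma sum_swap_inner:
  "(\<Sum>x\<in>A. \<Sum>y\<in>B. \<Sum>z\<in>C. f x y z) = (\<Sum>x\<in>A. \<Sum>z\<in>C. \<Sum>y\<in>B. f x y z)"
  by (rule sum.cong[OF refl], rule sum.swap)

lemma orthogonal_preserves_inner1:
  assumes "orthogonal_matrix g"
  shows "(\<Sum>k\<in>UNIV. (\<Sum>r\<in>UNIV. g$k$r * x r) * (\<Sum>a\<in>UNIV. g$k$a * y a)) = (\<Sum>r\<in>UNIV. x r * (y r::real))"
proof -
  have "(\<Sum>k\<in>UNIV. (\<Sum>r\<in>UNIV. g$k$r * x r) * (\<Sum>a\<in>UNIV. g$k$a * y a))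
      = (\<Sum>k\<in>UNIV. \<Sum>r\<in>UNIV. \<Sum>a\<in>UNIV. (g$k$r * g$k$a) * (x r * y a))"
    by (simp add: sum_product mult_ac)
  also have "\<dots> = (\<Sum>r\<in>UNIV. x r * y r)"
    by (rule sum_orthogonal_contract[OF assms])
  finally show ?thesis .
qed

lemma orthogonal_preserves_inner2:
  assumes "orthogonal_matrix g"
  shows "(\<Sum>k\<in>UNIV. \<Sum>l\<in>UNIV. (\<Sum>r\<in>UNIV. g$k$r * (\<Sum>s\<in>UNIV. g$l$s * X r s)) *
                              (\<Sum>a\<in>UNIV. g$k$a * (\<Sum>b\<in>UNIV. g$l$b * Y a b)))
       = (\<Sum>r\<in>UNIV. \<Sum>s\<in>UNIV. X r s * (Y r s::real))"
  by (rule sum.swap[THEN trans], simp only: orthogonal_preserves_inner1[OF assms],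
      rule sum.swap[THEN trans], simp only: orthogonal_preserves_inner1[OF assms])

lemma orthogonal_preserves_inner3:
  assumes "orthogonal_matrix g"
  shows "(\<Sum>k\<in>UNIV. \<Sum>m\<in>UNIV. \<Sum>n\<in>UNIV.
      (\<Sum>a\<in>UNIV. g$k$a * (\<Sum>c\<in>UNIV. g$m$c * (\<Sum>d\<in>UNIV. g$n$d * X a c d))) *
      (\<Sum>a\<in>UNIV. g$k$a * (\<Sum>c\<in>UNIV. g$m$c * (\<Sum>d\<in>UNIV. g$n$d * Y a c d))))
       = (\<Sum>a\<in>UNIV. \<Sum>c\<in>UNIV. \<Sum>d\<in>UNIV. X a c d * (Y a c d::real))"
  by (rule sum.swap[THEN trans], subst sum_swap_inner, simp only: orthogonal_preserves_inner1[OF assms],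
      subst sum_swap_inner, rule sum.swap[THEN trans], simp only: orthogonal_preserves_inner2[OF assms])

lemma act2_nested: "act2 g a i j = (\<Sum>p\<in>UNIV. g$i$p * (\<Sum>q\<in>UNIV. g$j$q * a p q))"
  by (simp add: act2_def sum_distrib_left mult.assoc)

lemma act4_nested:
  "act4 g H i j k l = (\<Sum>p\<in>UNIV. g$i$p * (\<Sum>q\<in>UNIV. g$j$q * (\<Sum>r\<in>UNIV. g$k$r * (\<Sum>s\<in>UNIV. g$l$s * H p q r s))))"
  "act4 g H i j k l = (\<Sum>r\<in>UNIV. g$k$r * (\<Sum>s\<in>UNIV. g$l$s * (\<Sum>p\<in>UNIV. g$i$p * (\<Sum>q\<in>UNIV. g$j$q * H p q r s))))"
  "act4 g H i j k l = (\<Sum>p\<in>UNIV. g$i$p * (\<Sum>r\<in>UNIV. g$k$r * (\<Sum>s\<in>UNIV. g$l$s * (\<Sum>q\<in>UNIV. g$j$q * H p q r s))))"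
  "act4 g H i j k l = (\<Sum>r\<in>UNIV. g$k$r * (\<Sum>p\<in>UNIV. g$i$p * (\<Sum>q\<in>UNIV. g$j$q * (\<Sum>s\<in>UNIV. g$l$s * H p q r s))))"
  by (simp_all add: act4_def sum_3 algebra_simps)

lemma d2_act4:
  assumes "orthogonal_matrix g"
  shows "d2 (act4 g H) = act2 g (d2 H)"
proof (intro ext)
  fix i j
  have "d2 (act4 g H) i j = (\<Sum>k\<in>UNIV. \<Sum>m\<in>UNIV. \<Sum>n\<in>UNIV.
      (\<Sum>a\<in>UNIV. g$k$a * (\<Sum>c\<in>UNIV. g$m$c * (\<Sum>d\<in>UNIV. g$n$d * (\<Sum>b\<in>UNIV. g$i$b * H a b c d)))) *
      (\<Sum>a\<in>UNIV. g$k$a * (\<Sum>c\<in>UNIV. g$m$c * (\<Sum>d\<in>UNIV. g$n$d * (\<Sum>q\<in>UNIV. g$j$q * H c d a q)))))"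
    unfolding d2_def tr13_def ddot44_def
    by (intro sum.cong refl arg_cong2[where f = times] act4_nested(3,4))
  also have "\<dots> = (\<Sum>a\<in>UNIV. \<Sum>c\<in>UNIV. \<Sum>d\<in>UNIV. (\<Sum>b\<in>UNIV. g$i$b * H a b c d) * (\<Sum>q\<in>UNIV. g$j$q * H c d a q))"
    by (rule orthogonal_preserves_inner3[OF assms])
  also have "\<dots> = act2 g (d2 H) i j"
    by (simp add: act2_nested d2_def tr13_def ddot44_def sum_3 algebra_simps)
  finally show "d2 (act4 g H) i j = act2 g (d2 H) i j" .
qed

lemma ddot42_act:
  assumes "orthogonal_matrix g"
  shows "ddot42 (act4 g H) (act2 g t) = act2 g (ddot42 H t)"
proof (intro ext)
  fix i j
  have "ddot42 (act4 g H) (act2 g t) i j = (\<Sum>k\<in>UNIV. \<Sum>l\<in>UNIV.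
     (\<Sum>r\<in>UNIV. g$k$r * (\<Sum>s\<in>UNIV. g$l$s * (\<Sum>p\<in>UNIV. g$i$p * (\<Sum>q\<in>UNIV. g$j$q * H p q r s)))) *
     (\<Sum>a\<in>UNIV. g$k$a * (\<Sum>b\<in>UNIV. g$l$b * t a b)))"
    unfolding ddot42_def act4_nested(2) act2_nested ..
  also have "\<dots> = (\<Sum>r\<in>UNIV. \<Sum>s\<in>UNIV. (\<Sum>p\<in>UNIV. g$i$p * (\<Sum>q\<in>UNIV. g$j$q * H p q r s)) * t r s)"
    by (rule orthogonal_preserves_inner2[OF assms])
  also have "\<dots> = act2 g (ddot42 H t) i j"
    by (simp add: act2_nested ddot42_def sum_3 algebra_simps)
  finally show "ddot42 (act4 g H) (act2 g t) i j = act2 g (ddot42 H t) i j" .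
qed

text \<open>\<open>act4\<close> acts on the four slots separately; these partial actions commute, which gives
  \<open>act4_mult\<close> without expanding the full quadruple sums.\<close>
definition act_slot1 :: "mat3 \<Rightarrow> tensor4 \<Rightarrow> tensor4" where
  "act_slot1 g X = (\<lambda>i j k l. \<Sum>p\<in>UNIV. g$i$p * X p j k l)"
definition act_slot2 :: "mat3 \<Rightarrow> tensor4 \<Rightarrow> tensor4" where
  "act_slot2 g X = (\<lambda>i j k l. \<Sum>p\<in>UNIV. g$j$p * X i p k l)"
definition act_slot3 :: "mat3 \<Rightarrow> tensor4 \<Rightarrow> tensor4" where
  "act_slot3 g X = (\<lambda>i j k l. \<Sum>p\<in>UNIV. g$k$p * X i j p l)"
definition act_slot4 :: "mat3 \<Rightarrow> tensor4 \<Rightarrow> tensor4" where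
  "act_slot4 g X = (\<lambda>i j k l. \<Sum>p\<in>UNIV. g$l$p * X i j k p)"

lemmas act_slot_defs = act_slot1_def act_slot2_def act_slot3_def act_slot4_def

lemma act4_eq_act_slots: "act4 g X = act_slot1 g (act_slot2 g (act_slot3 g (act_slot4 g X)))"
  by (simp add: fun_eq_iff act4_nested(1) act_slot_defs)

lemma act_slot_mult:
  "act_slot1 (g ** h) X = act_slot1 g (act_slot1 h X)" "act_slot2 (g ** h) X = act_slot2 g (act_slot2 h X)"
  "act_slot3 (g ** h) X = act_slot3 g (act_slot3 h X)" "act_slot4 (g ** h) X = act_slot4 g (act_slot4 h X)"
  by (simp_all add: act_slot_defs matrix_matrix_mult_def sum_3 algebra_simps)

lemma act_slot_commute:
  "act_slot1 h (act_slot2 g X) = act_slot2 g (act_slot1 h X)"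
  "act_slot1 h (act_slot3 g X) = act_slot3 g (act_slot1 h X)"
  "act_slot1 h (act_slot4 g X) = act_slot4 g (act_slot1 h X)"
  "act_slot2 h (act_slot3 g X) = act_slot3 g (act_slot2 h X)"
  "act_slot2 h (act_slot4 g X) = act_slot4 g (act_slot2 h X)"
  "act_slot3 h (act_slot4 g X) = act_slot4 g (act_slot3 h X)"
  by (simp_all add: act_slot_defs sum_3 algebra_simps)

lemma act4_mult: "act4 (g ** h) X = act4 g (act4 h X)"
  unfolding act4_eq_act_slots act_slot_mult by (simp only: act_slot_commute)

lemma act4_id: "act4 (mat 1) X = X"
  by (simp add: act4_nested(1) mat_def sum_3 fun_eq_iff forall_3)

lemma act2_mult: "act2 (g ** h) a = act2 g (act2 h a)"
  by (simp add: act2_def matrix_matrix_mult_def sum_3 algebra_simps fun_eq_iff)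

lemma act2_id: "act2 (mat 1) a = a"
  by (simp add: act2_def mat_def sum_3 fun_eq_iff forall_3)

lemma is_H4_act4:
  assumes g: "orthogonal_matrix g" and H: "is_H4 H"
  shows "is_H4 (act4 g H)"
proof -
  have s12: "\<And>i j k l. H i j k l = H j i k l" and s23: "\<And>i j k l. H i j k l = H i k j l"
    and s34: "\<And>i j k l. H i j k l = H i j l k" and tr: "\<And>i j. (\<Sum>k\<in>UNIV. H k k i j) = 0"
    using H unfolding is_H4_def by blast+
  have "act4 g H i j k l = act4 g H j i k l \<and> act4 g H i j k l = act4 g H i k j l
      \<and> act4 g H i j k l = act4 g H i j l k" for i j k l
    by (simp add: act4_def sum_3 algebra_simps s12 s23 s34)
  moreover have "(\<Sum>k\<in>UNIV. act4 g H k k i j) = 0" for i j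
  proof -
    have "(\<Sum>k\<in>UNIV. act4 g H k k i j)
        = (\<Sum>k\<in>UNIV. \<Sum>p\<in>UNIV. \<Sum>q\<in>UNIV. (g$k$p * g$k$q) * (\<Sum>r\<in>UNIV. g$i$r * (\<Sum>s\<in>UNIV. g$j$s * H p q r s)))"
      by (simp add: act4_nested(1) sum_distrib_left mult.assoc)
    also have "\<dots> = (\<Sum>p\<in>UNIV. \<Sum>r\<in>UNIV. g$i$r * (\<Sum>s\<in>UNIV. g$j$s * H p p r s))"
      by (rule sum_orthogonal_contract[OF g])
    also have "\<dots> = (\<Sum>r\<in>UNIV. g$i$r * (\<Sum>s\<in>UNIV. g$j$s * (\<Sum>p\<in>UNIV. H p p r s)))"
      by (simp add: sum_3 algebra_simps)
    also have "\<dots> = 0" by (simp add: tr)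
    finally show ?thesis .
  qed
  ultimately show ?thesis unfolding is_H4_def by blast
qed

abbreviation conj_mat :: "mat3 \<Rightarrow> mat3 \<Rightarrow> mat3" where
  "conj_mat g k \<equiv> g ** k ** transpose g"

lemma SO3_orthogonal: "g \<in> SO3 \<Longrightarrow> orthogonal_matrix g"
  by (simp add: SO3_def)

lemma SO3_transpose: "g \<in> SO3 \<Longrightarrow> transpose g \<in> SO3"
  by (simp add: SO3_def)

lemma SO3_mult: "g \<in> SO3 \<Longrightarrow> h \<in> SO3 \<Longrightarrow> g ** h \<in> SO3"
  by (simp add: SO3_def orthogonal_matrix_mul det_mul)

lemma SO3_id: "mat 1 \<in> SO3"
  by (simp add: SO3_def orthogonal_matrix_id)

lemma SO3_conj_mat: "g \<in> SO3 \<Longrightarrow> k \<in> SO3 \<Longrightarrow> conj_mat g k \<in> SO3"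
  by (intro SO3_mult SO3_transpose)

lemma conj_mat_conj_mat: "conj_mat g (conj_mat h k) = conj_mat (g ** h) k"
  by (simp only: matrix_mul_assoc matrix_transpose_mul)

lemma conj_mat_transpose_left:
  assumes "g \<in> SO3" shows "conj_mat (transpose g) (conj_mat g k) = k"
  using conj_mat_conj_mat[of "transpose g" g k]
  by (simp only: SO3_orthogonal[OF assms, unfolded orthogonal_matrix_def] transpose_mat
      matrix_mul_lid matrix_mul_rid)

lemma conj_mat_transpose_right:
  assumes "g \<in> SO3" shows "conj_mat g (conj_mat (transpose g) k) = k"
  using conj_mat_transpose_left[OF SO3_transpose[OF assms]] by (simp only: transpose_transpose)

lemma inj_conj_mat: "g \<in> SO3 \<Longrightarrow> inj (conj_mat g)"
  by (rule inj_on_inverseI[where g = "conj_mat (transpose g)"]) (rule conj_mat_transpose_left)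

lemma stabilizer_act_conj_mat:
  fixes act :: "mat3 \<Rightarrow> 'a \<Rightarrow> 'a"
  assumes act_mult: "\<And>g h x. act (g ** h) x = act g (act h x)"
    and act_id: "\<And>x. act (mat 1) x = x"
    and g: "g \<in> SO3"
  shows "{k \<in> SO3. act k (act g a) = act g a} = conj_mat g ` {k \<in> SO3. act k a = a}"
proof
  have gg: "transpose g ** g = mat 1"
    using SO3_orthogonal[OF g] by (simp add: orthogonal_matrix_def)
  show "conj_mat g ` {k \<in> SO3. act k a = a} \<subseteq> {k \<in> SO3. act k (act g a) = act g a}"
  proof clarify
    fix k assume k: "k \<in> SO3" "act k a = a"
    have "act (conj_mat g k) (act g a) = act g (act k (act (transpose g ** g) a))"
      by (simp only: act_mult)
    also have "\<dots> = act g a"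
      using k(2) by (simp only: gg act_id)
    finally show "conj_mat g k \<in> SO3 \<and> act (conj_mat g k) (act g a) = act g a"
      using SO3_conj_mat[OF g k(1)] by blast
  qed
  show "{k \<in> SO3. act k (act g a) = act g a} \<subseteq> conj_mat g ` {k \<in> SO3. act k a = a}"
  proof clarify
    fix k assume k: "k \<in> SO3" "act k (act g a) = act g a"
    define k' where "k' = conj_mat (transpose g) k"
    have "act k' a = act (transpose g) (act k (act g a))"
      unfolding k'_def by (simp only: act_mult transpose_transpose)
    also have "\<dots> = a"
      using k(2) by (simp flip: act_mult add: gg act_id)
    finally have "k' \<in> {k \<in> SO3. act k a = a}"
      unfolding k'_def using SO3_conj_mat[OF SO3_transpose[OF g] k(1)] by blast
    moreover have "k = conj_mat g k'"
      unfolding k'_def using g by (simp only: conj_mat_transpose_right)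
    ultimately show "k \<in> conj_mat g ` {k \<in> SO3. act k a = a}" by blast
  qed
qed

lemma stab2_act2: "g \<in> SO3 \<Longrightarrow> stab2 (act2 g a) = conj_mat g ` stab2 a"
  unfolding stab2_def by (rule stabilizer_act_conj_mat) (simp_all add: act2_mult act2_id)

lemma stab4_act4: "g \<in> SO3 \<Longrightarrow> stab4 (act4 g H) = conj_mat g ` stab4 H"
  unfolding stab4_def by (rule stabilizer_act_conj_mat) (simp_all add: act4_mult act4_id)

lemma in_class_refl: "in_class G G"
  unfolding in_class_def by (rule bexI[OF _ SO3_id]) (simp add: transpose_mat)

lemma in_class_conj_mat_image:
  assumes g: "g \<in> SO3"
  shows "in_class (conj_mat g ` G) K \<longleftrightarrow> in_class G K"
proof
  assume "in_class (conj_mat g ` G) K"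
  then obtain h where h: "h \<in> SO3" "conj_mat g ` G = conj_mat h ` K"
    by (auto simp: in_class_def)
  have "G = conj_mat (transpose g) ` conj_mat g ` G"
    by (simp only: image_comp o_def conj_mat_transpose_left[OF g] image_ident)
  also have "\<dots> = conj_mat (transpose g ** h) ` K"
    using h by (simp only: image_comp o_def conj_mat_conj_mat)
  finally show "in_class G K"
    unfolding in_class_def using g h SO3_mult SO3_transpose by blast
next
  assume "in_class G K"
  then obtain h where h: "h \<in> SO3" "G = conj_mat h ` K"
    by (auto simp: in_class_def)
  hence "conj_mat g ` G = conj_mat (g ** h) ` K"
    by (simp only: image_comp o_def conj_mat_conj_mat)
  thus "in_class (conj_mat g ` G) K"
    unfolding in_class_def using g h SO3_mult by blast
qed

lemma trace_conj_mat:
  assumes "g \<in> SO3" shows "trace (conj_mat g k) = trace k"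
proof -
  have "trace (conj_mat g k) = trace ((transpose g ** g) ** k)"
    by (metis trace_mul_sym matrix_mul_assoc)
  also have "transpose g ** g = mat 1"
    using assms SO3_orthogonal orthogonal_matrix_def by blast
  finally show ?thesis by (simp add: matrix_mul_lid)
qed

lemma rotz_SO3: "rotz th \<in> SO3"
proof -
  have "orthogonal_matrix (rotz th)"
    unfolding orthogonal_matrix_def using sin_cos_squared_add3[of th]
    by (simp add: matrix_matrix_mult_def transpose_def mat_def vec_eq_iff forall_3 sum_3 rotz_def
        algebra_simps)
  moreover have "det (rotz th) = 1"
    by (simp add: det_3 rotz_def)
  ultimately show ?thesis by (simp add: SO3_def)
qed

lemma rotx_pi_SO3: "rotx_pi \<in> SO3"
proof -
  have "orthogonal_matrix rotx_pi"
    unfolding orthogonal_matrix_def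
    by (simp add: matrix_matrix_mult_def transpose_def mat_def vec_eq_iff forall_3 sum_3 rotx_pi_def)
  moreover have "det rotx_pi = 1"
    by (simp add: det_3 rotx_pi_def)
  ultimately show ?thesis by (simp add: SO3_def)
qed

lemma rotz_cis_cong: "cis a = cis b \<Longrightarrow> rotz a = rotz b"
  by (simp add: rotz_def complex_eq_iff)

lemma rotz_mult: "rotz a ** rotz b = rotz (a + b)"
  by (simp add: rotz_def matrix_matrix_mult_def vec_eq_iff forall_3 sum_3 cos_add sin_add algebra_simps)

lemma transpose_rotz: "transpose (rotz a) = rotz (- a)"
  by (simp add: rotz_def transpose_def vec_eq_iff forall_3)

lemma rotx_pi_rotz: "rotx_pi ** rotz b = rotz (- b) ** rotx_pi"
  by (simp add: rotz_def rotx_pi_def matrix_matrix_mult_def vec_eq_iff forall_3 sum_3)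

lemma rotz_in_O2: "rotz th \<in> O2"
  unfolding O2_def by blast

lemma rotx_pi_in_O2: "rotx_pi \<in> O2"
proof -
  have "rotx_pi = rotz 0 ** rotx_pi"
    by (simp add: rotz_def rotx_pi_def matrix_matrix_mult_def vec_eq_iff forall_3 sum_3)
  thus ?thesis unfolding O2_def by blast
qed

lemma conj_mat_rotz_rotz: "conj_mat (rotz a) (rotz b) = rotz b"
  by (simp add: rotz_mult transpose_rotz)

lemma conj_mat_rotz_flip: "conj_mat (rotz a) (rotz b ** rotx_pi) = rotz (b + 2 * a) ** rotx_pi"
proof -
  have "conj_mat (rotz a) (rotz b ** rotx_pi) = rotz a ** rotz b ** (rotx_pi ** rotz (- a))"
    by (simp add: transpose_rotz matrix_mul_assoc)
  also have "\<dots> = rotz (b + 2 * a) ** rotx_pi"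
    by (simp add: rotx_pi_rotz matrix_mul_assoc rotz_mult add_ac)
  finally show ?thesis .
qed

lemma conj_mat_rotz_O2: "conj_mat (rotz a) ` O2 = O2"
proof
  show "conj_mat (rotz a) ` O2 \<subseteq> O2"
    unfolding O2_def by (auto simp: conj_mat_rotz_rotz conj_mat_rotz_flip)
  have "rotz b \<in> conj_mat (rotz a) ` O2" for b
    using conj_mat_rotz_rotz[of a b] rotz_in_O2 by (metis image_eqI)
  moreover have "rotz b ** rotx_pi \<in> conj_mat (rotz a) ` O2" for b
  proof -
    have "rotz b ** rotx_pi = conj_mat (rotz a) (rotz (b - 2 * a) ** rotx_pi)"
      by (simp add: conj_mat_rotz_flip)
    thus ?thesis unfolding O2_def by blast
  qed
  ultimately show "O2 \<subseteq> conj_mat (rotz a) ` O2"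
    unfolding O2_def by blast
qed

lemma trace_rotz: "trace (rotz th) = 1 + 2 * cos th"
  by (simp add: trace_def sum_3 rotz_def)

lemma trace_rotz_rotx_pi: "trace (rotz th ** rotx_pi) = -1"
  by (simp add: trace_def rotz_def rotx_pi_def matrix_matrix_mult_def sum_3)

text \<open>The trace is a conjugation invariant; on O(2) it equals -1 except on the rotations about the
  z-axis, where it determines the cosine of the angle.\<close>
lemma in_class_obtain_rotz:
  assumes "in_class G K" "rotz th0 \<in> K" "G \<subseteq> O2" "cos th0 \<noteq> -1"
  obtains th where "rotz th \<in> G" "cos th = cos th0"
proof -
  obtain g where g: "g \<in> SO3" "G = conj_mat g ` K"
    using assms(1) unfolding in_class_def by blast
  define R where "R = conj_mat g (rotz th0)"
  have "R \<in> G" unfolding R_def using g assms(2) by blast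
  have tr: "trace R = 1 + 2 * cos th0"
    unfolding R_def trace_conj_mat[OF g(1)] trace_rotz ..
  from \<open>R \<in> G\<close> assms(3) obtain th where "R = rotz th"
    unfolding O2_def using tr assms(4) trace_rotz_rotx_pi by fastforce
  with tr have "cos th = cos th0" by (simp add: trace_rotz)
  with that \<open>R \<in> G\<close> \<open>R = rotz th\<close> show thesis by blast
qed

lemma Dn_eq:
  assumes n: "n > 0"
  shows "Dn n = rotz ` {th. cis (real n * th) = 1} \<union> (\<lambda>th. rotz th ** rotx_pi) ` {th. cis (real n * th) = 1}"
proof -
  have "cis (real n * (2 * pi * real k / real n)) = 1" for k
    using n cis_multiple_2pi[of "real k"] by (simp add: mult.commute)
  moreover have "\<exists>k<n. rotz th = rotz (2 * pi * real k / real n)" if "cis (real n * th) = 1" for th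
  proof -
    have "cis th \<in> {z. z ^ n = 1}"
      using that by (simp only: Complex.DeMoivre mem_Collect_eq)
    then obtain k where "k < n" "cis th = cis (2 * pi * real k / real n)"
      using Complex.bij_betw_roots_unity[OF n] unfolding bij_betw_def by auto
    thus ?thesis using rotz_cis_cong by blast
  qed
  ultimately have "(\<lambda>k. rotz (2 * pi * real k / real n)) ` {..<n} = rotz ` {th. cis (real n * th) = 1}"
    "(\<lambda>k. rotz (2 * pi * real k / real n) ** rotx_pi) ` {..<n}
       = (\<lambda>th. rotz th ** rotx_pi) ` {th. cis (real n * th) = 1}"
    by (fastforce simp: image_iff)+
  thus ?thesis unfolding Dn_def by simp
qed

lemma cis_minus_Arg_mult: "cis (- Arg w) * w = of_real (cmod w)"
proof -
  have "cis (- Arg w) * w = of_real (cmod w) * (cis (- Arg w) * cis (Arg w))"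
    by (subst (2) rcis_cmod_Arg[symmetric]) (simp add: rcis_def)
  thus ?thesis by (simp add: cis_mult)
qed

lemma cis_mult_eq_self_iff: "w \<noteq> 0 \<Longrightarrow> cis a * w = w \<longleftrightarrow> cis a = 1"
  by (metis mult_cancel_right1)

definition TI_z :: "tensor2 \<Rightarrow> bool" where
  "TI_z X \<longleftrightarrow> X 1 2 = 0 \<and> X 2 1 = 0 \<and> X 1 3 = 0 \<and> X 3 1 = 0 \<and> X 2 3 = 0 \<and> X 3 2 = 0
     \<and> X 2 2 = X 1 1"

lemma act2_rotz_weights:
  assumes "is_Sym2 X" and Y: "Y = act2 (rotz th) X"
  shows "Complex (Y 1 3) (Y 2 3) = cis th * Complex (X 1 3) (X 2 3)"
    and "Complex (Y 1 1 - Y 2 2) (2 * Y 1 2) = cis (2 * th) * Complex (X 1 1 - X 2 2) (2 * X 1 2)"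
proof -
  have s: "X 2 1 = X 1 2" "X 3 1 = X 1 3" "X 3 2 = X 2 3"
    using assms(1) unfolding is_Sym2_def by simp_all
  show "Complex (Y 1 3) (Y 2 3) = cis th * Complex (X 1 3) (X 2 3)"
    unfolding Y by (simp add: complex_eq_iff act2_def sum_3 rotz_def s algebra_simps)
  show "Complex (Y 1 1 - Y 2 2) (2 * Y 1 2) = cis (2 * th) * Complex (X 1 1 - X 2 2) (2 * X 1 2)"
  proof -
    have c2: "cis (2 * th) = cis th * cis th"
      by (simp add: cis_mult)
    show ?thesis
      unfolding Y c2 by (simp add: complex_eq_iff act2_def sum_3 rotz_def s algebra_simps)
  qed
qed

lemma TI_z_of_rotz_fixed:
  assumes sym: "is_Sym2 X" and fixed: "act2 (rotz th) X = X" and th: "cos (2 * th) \<noteq> 1"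
  shows "TI_z X"
proof -
  have cis2: "cis (2 * th) \<noteq> 1"
    using th by (auto simp: complex_eq_iff)
  moreover have "cis (2 * th) = cis th * cis th"
    by (simp add: cis_mult)
  ultimately have "cis th \<noteq> 1"
    by auto
  hence "Complex (X 1 3) (X 2 3) = 0"
    using cis_mult_eq_self_iff act2_rotz_weights(1)[OF sym, of X th] fixed by metis
  moreover have "Complex (X 1 1 - X 2 2) (2 * X 1 2) = 0"
    using cis_mult_eq_self_iff cis2 act2_rotz_weights(2)[OF sym, of X th] fixed by metis
  ultimately show ?thesis
    using sym unfolding TI_z_def is_Sym2_def by (auto simp: complex_eq_iff)
qed

lemma O2_subset_stab2_TI_z:
  assumes "TI_z X" shows "O2 \<subseteq> stab2 X"
proof -
  have "act2 (rotz th) X = X" for th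
  proof -
    have csq: "cos th * (cos th * y) + sin th * (sin th * y) = y" for y
      by (metis mult.assoc distrib_right mult_1 sin_cos_squared_add3)
    show ?thesis
      using assms by (simp add: csq fun_eq_iff forall_3 TI_z_def act2_def sum_3 rotz_def algebra_simps)
  qed
  moreover have "act2 rotx_pi X = X"
    using assms by (simp add: fun_eq_iff forall_3 TI_z_def act2_def sum_3 rotx_pi_def)
  ultimately show ?thesis
    unfolding O2_def stab2_def using rotz_SO3 rotx_pi_SO3 SO3_mult by (auto simp: act2_mult)
qed

text \<open>If \<open>t\<close> were isotropic it would also be fixed by the quarter turn \<open>Rx\<close> about the x-axis,
  which is not in O(2).\<close>
lemma TI_z_of_stab2_eq_O2:
  assumes "stab2 t = O2"
  shows "TI_z t" and "t 1 1 \<noteq> t 3 3"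
proof -
  have r: "act2 (rotz (pi/2)) t = t" and x: "act2 rotx_pi t = t"
    using assms rotz_in_O2 rotx_pi_in_O2 unfolding stab2_def by blast+
  have "act2 rotx_pi t 1 2 = t 1 2" "act2 rotx_pi t 2 1 = t 2 1" "act2 rotx_pi t 1 3 = t 1 3"
    "act2 rotx_pi t 3 1 = t 3 1" "act2 (rotz (pi/2)) t 1 1 = t 1 1"
    "act2 (rotz (pi/2)) t 2 3 = t 2 3" "act2 (rotz (pi/2)) t 3 2 = t 3 2"
    using r x by simp_all
  thus ti: "TI_z t"
    unfolding TI_z_def by (simp_all add: act2_def sum_3 rotx_pi_def rotz_def)
  show "t 1 1 \<noteq> t 3 3"
  proof
    assume eq: "t 1 1 = t 3 3"
    define Rx :: mat3 where "Rx = vector [vector [1, 0, 0], vector [0, 0, -1], vector [0, 1, 0]]"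
    have "orthogonal_matrix Rx"
      unfolding orthogonal_matrix_def
      by (simp add: matrix_matrix_mult_def transpose_def mat_def vec_eq_iff forall_3 sum_3 Rx_def)
    moreover have "det Rx = 1" by (simp add: det_3 Rx_def)
    moreover have "act2 Rx t = t"
      using ti eq by (simp add: fun_eq_iff forall_3 TI_z_def act2_def sum_3 Rx_def)
    ultimately have "Rx \<in> O2"
      using assms unfolding stab2_def SO3_def by blast
    moreover have "Rx $ 3 $ 3 = 0"
      by (simp add: Rx_def)
    ultimately show False
      by (auto simp: O2_def rotz_def rotx_pi_def matrix_matrix_mult_def sum_3)
  qed
qed

lemma is_Sym2_d2:
  assumes "is_H4 H" shows "is_Sym2 (d2 H)"
proof -
  have "\<And>i j k l. H i j k l = H j i k l" "\<And>i j k l. H i j k l = H i k j l"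
    "\<And>i j k l. H i j k l = H i j l k"
    using assms unfolding is_H4_def by blast+
  thus ?thesis
    unfolding is_Sym2_def forall_3 by (simp add: d2_def tr13_def ddot44_def sum_3 algebra_simps)
qed

lemma is_Sym2_ddot42:
  assumes "is_H4 H" shows "is_Sym2 (ddot42 H t)"
proof -
  have "\<And>i j k l. H i j k l = H j i k l"
    using assms unfolding is_H4_def by blast
  thus ?thesis
    unfolding is_Sym2_def ddot42_def by simp
qed

definition index_count :: "3 \<Rightarrow> 3 \<Rightarrow> 3 \<Rightarrow> 3 \<Rightarrow> 3 \<Rightarrow> nat" where
  "index_count x i j k l = of_bool (i = x) + of_bool (j = x) + of_bool (k = x) + of_bool (l = x)"

text \<open>The harmonic tensors with \<open>H\<^sub>1\<^sub>2\<^sub>3\<^sub>3 = H\<^sub>1\<^sub>3\<^sub>3\<^sub>3 = H\<^sub>2\<^sub>3\<^sub>3\<^sub>3 = 0\<close> and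
  \<open>H\<^sub>1\<^sub>1\<^sub>3\<^sub>3 = H\<^sub>2\<^sub>2\<^sub>3\<^sub>3 = e\<close>, parametrised by
  \<open>w = (4 H\<^sub>1\<^sub>1\<^sub>1\<^sub>1 + 3 e) + 4 i H\<^sub>1\<^sub>1\<^sub>1\<^sub>2\<close> and \<open>z = H\<^sub>1\<^sub>1\<^sub>1\<^sub>3 + i H\<^sub>1\<^sub>1\<^sub>2\<^sub>3\<close>;
  by total symmetry an entry only depends on how many of its indices are 2 and how many are 3.\<close>
definition harmonic_nf :: "complex \<Rightarrow> real \<Rightarrow> complex \<Rightarrow> tensor4" where
  "harmonic_nf w e z i j k l =
     (let n2 = index_count 2 i j k l; n3 = index_count 3 i j k l in
      if n3 = 0 then
        (if n2 = 0 \<or> n2 = 4 then (Re w - 3 * e) / 4 else if n2 = 1 then Im w / 4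
         else if n2 = 2 then - (Re w + e) / 4 else - Im w / 4)
      else if n3 = 1 then
        (if n2 = 0 then Re z else if n2 = 1 then Im z else if n2 = 2 then - Re z else - Im z)
      else if n3 = 2 then (if n2 = 1 then 0 else e)
      else if n3 = 3 then 0
      else - 2 * e)"

lemma is_H4_harmonic_nf: "is_H4 (harmonic_nf w e z)"
  unfolding is_H4_def
  by (simp add: all_comm[where P = "\<lambda>i j. _"] forall_3 sum_3 harmonic_nf_def index_count_def
      field_simps)

lemma is_H4_eqI:
  assumes X: "is_H4 X" and Y: "is_H4 Y"
    and "X 1 1 1 1 = Y 1 1 1 1" "X 1 1 1 2 = Y 1 1 1 2" "X 1 1 1 3 = Y 1 1 1 3" "X 1 1 2 2 = Y 1 1 2 2"
    "X 1 1 2 3 = Y 1 1 2 3" "X 1 1 3 3 = Y 1 1 3 3" "X 1 2 2 2 = Y 1 2 2 2" "X 1 2 2 3 = Y 1 2 2 3"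
    "X 1 2 3 3 = Y 1 2 3 3" "X 1 3 3 3 = Y 1 3 3 3" "X 2 2 2 2 = Y 2 2 2 2" "X 2 2 2 3 = Y 2 2 2 3"
    "X 2 2 3 3 = Y 2 2 3 3" "X 2 3 3 3 = Y 2 3 3 3" "X 3 3 3 3 = Y 3 3 3 3"
  shows "X = Y"
proof -
  have "\<And>i j k l. X i j k l = X j i k l" "\<And>i j k l. X i j k l = X i k j l"
    "\<And>i j k l. X i j k l = X i j l k" "\<And>i j k l. Y i j k l = Y j i k l"
    "\<And>i j k l. Y i j k l = Y i k j l" "\<And>i j k l. Y i j k l = Y i j l k"
    using X Y unfolding is_H4_def by blast+
  moreover have all_index: "(\<forall>i j k l. P i j k l) \<longleftrightarrow> (\<forall>j k l. P 1 j k l \<and> P 2 j k l \<and> P 3 j k l)"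
    for P :: "3 \<Rightarrow> 3 \<Rightarrow> 3 \<Rightarrow> 3 \<Rightarrow> bool"
    by (metis exhaust_3)
  ultimately have "\<forall>i j k l. X i j k l = Y i j k l"
    unfolding all_index forall_3 using assms(3-) by simp
  thus ?thesis by (simp add: fun_eq_iff)
qed

lemma act4_rotx_pi_harmonic_nf: "act4 rotx_pi (harmonic_nf w e z) = harmonic_nf (cnj w) e (- cnj z)"
  by (rule is_H4_eqI[OF is_H4_act4[OF SO3_orthogonal[OF rotx_pi_SO3] is_H4_harmonic_nf] is_H4_harmonic_nf])
    (simp_all add: act4_def sum_3 rotx_pi_def harmonic_nf_def index_count_def field_simps)

lemma harmonic_nf_inject:
  assumes "harmonic_nf w e z = harmonic_nf w' e' z'"
  shows "w = w'" "e = e'" "z = z'"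
proof -
  have "harmonic_nf w e z i j k l = harmonic_nf w' e' z' i j k l" for i j k l
    using assms by simp
  from this[of 1 1 1 1] this[of 1 1 3 3] this[of 1 1 1 2] this[of 1 1 1 3] this[of 1 1 2 3]
  show "w = w'" "e = e'" "z = z'"
    by (simp_all add: harmonic_nf_def index_count_def complex_eq_iff)
qed

lemma d2_harmonic_nf:
  "Complex (d2 (harmonic_nf w e z) 1 3) (d2 (harmonic_nf w e z) 2 3) = w * cnj z"
  by (simp add: complex_eq_iff d2_def tr13_def ddot44_def sum_3 harmonic_nf_def index_count_def
      field_simps)

lemma act4_rotz_harmonic_nf:
  "act4 (rotz th) (harmonic_nf w e z) = harmonic_nf (cis (4 * th) * w) e (cis (3 * th) * z)"
proof -
  have c4: "cis (4 * th) = cis th * cis th * cis th * cis th"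
    and c3: "cis (3 * th) = cis th * cis th * cis th"
    by (simp_all add: cis_mult algebra_simps)
  show ?thesis
    unfolding c4 c3
    by (rule is_H4_eqI[OF is_H4_act4[OF SO3_orthogonal[OF rotz_SO3] is_H4_harmonic_nf] is_H4_harmonic_nf];
        simp add: act4_def sum_3 rotz_def harmonic_nf_def index_count_def field_simps;
        use sin_cos_squared_add[of th] in algebra)
qed

text \<open>Since \<open>H\<close> is traceless, only the anisotropic part \<open>(t\<^sub>3\<^sub>3 - t\<^sub>1\<^sub>1) e\<^sub>3 \<otimes> e\<^sub>3\<close>
  of \<open>t\<close> contributes to \<open>H : t\<close>.\<close>
lemma ddot42_TI_z:
  assumes H: "is_H4 H" and t: "TI_z t"
  shows "ddot42 H t i j = (t 3 3 - t 1 1) * H i j 3 3"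
proof -
  have tr: "(\<Sum>k\<in>UNIV. H k k i j) = 0"
    using H unfolding is_H4_def by blast
  have sym: "H k k i j = H i j k k" for k
    using H unfolding is_H4_def by metis
  have "ddot42 H t i j = t 1 1 * (H i j 1 1 + H i j 2 2 + H i j 3 3) + (t 3 3 - t 1 1) * H i j 3 3"
    using t by (simp add: ddot42_def sum_3 TI_z_def algebra_simps)
  also have "H i j 1 1 + H i j 2 2 + H i j 3 3 = 0"
    using tr by (simp add: sum_3 sym)
  finally show ?thesis by simp
qed

lemma harmonic_nf_of_TI_z:
  assumes H: "is_H4 H" and t: "TI_z t" "t 1 1 \<noteq> t 3 3" and Ht: "TI_z (ddot42 H t)"
  shows "H = harmonic_nf (Complex (4 * H 1 1 1 1 + 3 * H 1 1 3 3) (4 * H 1 1 1 2)) (H 1 1 3 3)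
               (Complex (H 1 1 1 3) (H 1 1 2 3))"
proof -
  have s12: "\<And>i j k l. H i j k l = H j i k l" and s23: "\<And>i j k l. H i j k l = H i k j l"
    and s34: "\<And>i j k l. H i j k l = H i j l k" and tr: "\<And>i j. (\<Sum>k\<in>UNIV. H k k i j) = 0"
    using H unfolding is_H4_def by blast+
  have tr': "H 1 1 1 1 + H 1 1 2 2 + H 1 1 3 3 = 0" "H 1 1 2 2 + H 2 2 2 2 + H 2 2 3 3 = 0"
    "H 1 1 3 3 + H 2 2 3 3 + H 3 3 3 3 = 0" "H 1 1 1 2 + H 1 2 2 2 + H 1 2 3 3 = 0"
    "H 1 1 1 3 + H 1 2 2 3 + H 1 3 3 3 = 0" "H 1 1 2 3 + H 2 2 2 3 + H 2 3 3 3 = 0"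
    using tr[of 1 1] tr[of 2 2] tr[of 3 3] tr[of 1 2] tr[of 1 3] tr[of 2 3]
    by (simp_all add: sum_3 s12 s23 s34 add_ac)
  have "H 1 2 3 3 = 0" "H 1 3 3 3 = 0" "H 2 3 3 3 = 0" "H 2 2 3 3 = H 1 1 3 3"
    using Ht t(2) unfolding TI_z_def ddot42_TI_z[OF H t(1)] by (simp_all add: s12 s23 s34)
  with tr' show ?thesis
    by (intro is_H4_eqI[OF H is_H4_harmonic_nf])
      (simp_all add: harmonic_nf_def index_count_def s12 s23 s34 field_simps)
qed

definition trigonal_tetragonal_or_TI :: "mat3 set \<Rightarrow> bool" where
  "trigonal_tetragonal_or_TI G \<longleftrightarrow> in_class G (Dn 3) \<or> in_class G (Dn 4) \<or> in_class G O2"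

lemma trigonal_tetragonal_or_TI_conj_mat:
  "g \<in> SO3 \<Longrightarrow> trigonal_tetragonal_or_TI (conj_mat g ` G) \<longleftrightarrow> trigonal_tetragonal_or_TI G"
  unfolding trigonal_tetragonal_or_TI_def by (simp add: in_class_conj_mat_image)

lemma stab4_Int_O2_act4_rotz: "stab4 (act4 (rotz a) X) \<inter> O2 = conj_mat (rotz a) ` (stab4 X \<inter> O2)"
  using stab4_act4[OF rotz_SO3, of a X] conj_mat_rotz_O2[of a] inj_conj_mat[OF rotz_SO3, of a]
  by (simp add: image_Int)

lemma stab4_Int_O2:
  assumes flip: "act4 rotx_pi X = X"
  shows "stab4 X \<inter> O2 = rotz ` {th. act4 (rotz th) X = X} \<union> (\<lambda>th. rotz th ** rotx_pi) ` {th. act4 (rotz th) X = X}"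
proof -
  have "act4 (rotz th ** rotx_pi) X = act4 (rotz th) X" for th
    by (simp add: act4_mult flip)
  thus ?thesis
    unfolding O2_def stab4_def using rotz_SO3 rotx_pi_SO3 SO3_mult by auto
qed

lemma stab4_Int_O2_eq_Dn:
  assumes "act4 rotx_pi X = X" and "\<And>th. act4 (rotz th) X = X \<longleftrightarrow> cis (real n * th) = 1" and "n > 0"
  shows "stab4 X \<inter> O2 = Dn n"
  unfolding stab4_Int_O2[OF assms(1)] Dn_eq[OF assms(3)] assms(2) ..

lemma stab4_Int_O2_harmonic_nf_0: "stab4 (harmonic_nf 0 e 0) \<inter> O2 = O2"
proof -
  have "act4 rotx_pi (harmonic_nf 0 e 0) = harmonic_nf 0 e 0"
    by (simp add: act4_rotx_pi_harmonic_nf)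
  thus ?thesis
    by (subst stab4_Int_O2) (simp_all add: act4_rotz_harmonic_nf O2_def)
qed

lemma stab4_Int_O2_harmonic_nf_real:
  assumes "r \<noteq> 0" shows "stab4 (harmonic_nf (of_real r) e 0) \<inter> O2 = Dn 4"
proof (rule stab4_Int_O2_eq_Dn)
  show "act4 rotx_pi (harmonic_nf (of_real r) e 0) = harmonic_nf (of_real r) e 0"
    by (simp add: act4_rotx_pi_harmonic_nf)
  show "act4 (rotz th) (harmonic_nf (of_real r) e 0) = harmonic_nf (of_real r) e 0
      \<longleftrightarrow> cis (real 4 * th) = 1" for th
    using assms by (auto simp: act4_rotz_harmonic_nf cis_mult_eq_self_iff dest: harmonic_nf_inject)
qed simp

lemma stab4_Int_O2_harmonic_nf_imaginary:
  assumes "r \<noteq> 0" shows "stab4 (harmonic_nf 0 e (\<i> * of_real r)) \<inter> O2 = Dn 3"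
proof (rule stab4_Int_O2_eq_Dn)
  show "act4 rotx_pi (harmonic_nf 0 e (\<i> * of_real r)) = harmonic_nf 0 e (\<i> * of_real r)"
    by (simp add: act4_rotx_pi_harmonic_nf)
  show "act4 (rotz th) (harmonic_nf 0 e (\<i> * of_real r)) = harmonic_nf 0 e (\<i> * of_real r)
      \<longleftrightarrow> cis (real 3 * th) = 1" for th
    using assms by (auto simp: act4_rotz_harmonic_nf cis_mult_eq_self_iff dest: harmonic_nf_inject)
qed simp

lemma trigonal_tetragonal_or_TI_harmonic_nf:
  assumes "w * cnj z = 0"
  shows "trigonal_tetragonal_or_TI (stab4 (harmonic_nf w e z) \<inter> O2)"
proof -
  have rotate: "trigonal_tetragonal_or_TI (stab4 (harmonic_nf w e z) \<inter> O2)"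
    if "stab4 (act4 (rotz a) (harmonic_nf w e z)) \<inter> O2 \<in> {Dn 3, Dn 4}" for a
  proof -
    have "trigonal_tetragonal_or_TI (stab4 (act4 (rotz a) (harmonic_nf w e z)) \<inter> O2)"
      using that in_class_refl unfolding trigonal_tetragonal_or_TI_def by auto
    thus ?thesis
      unfolding stab4_Int_O2_act4_rotz trigonal_tetragonal_or_TI_conj_mat[OF rotz_SO3] .
  qed
  txt \<open>Rotate \<open>w\<close> onto the positive reals, resp. \<open>z\<close> onto the positive imaginary axis,
    where the flip \<open>rotx_pi\<close> fixes them.\<close>
  consider "w = 0" "z = 0" | "w \<noteq> 0" "z = 0" | "w = 0" "z \<noteq> 0"
    using assms by auto
  thus ?thesis
  proof cases
    case 1
    thus ?thesis
      using stab4_Int_O2_harmonic_nf_0 in_class_refl unfolding trigonal_tetragonal_or_TI_def by simp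
  next
    case 2
    hence "act4 (rotz (- Arg w / 4)) (harmonic_nf w e z) = harmonic_nf (of_real (cmod w)) e 0"
      by (simp add: act4_rotz_harmonic_nf cis_minus_Arg_mult)
    thus ?thesis
      using rotate[of "- Arg w / 4"] stab4_Int_O2_harmonic_nf_real[of "cmod w" e] 2 by simp
  next
    case 3
    have "cis (pi / 2 - Arg z) * z = \<i> * of_real (cmod z)"
      unfolding diff_conv_add_uminus cis_mult[symmetric] mult.assoc cis_minus_Arg_mult by simp
    moreover have "3 * ((pi / 2 - Arg z) / 3) = pi / 2 - Arg z"
      by simp
    ultimately have "act4 (rotz ((pi / 2 - Arg z) / 3)) (harmonic_nf w e z) = harmonic_nf 0 e (\<i> * of_real (cmod z))"
      using 3 by (simp only: act4_rotz_harmonic_nf mult_zero_right)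
    thus ?thesis
      using rotate[of "(pi / 2 - Arg z) / 3"] stab4_Int_O2_harmonic_nf_imaginary[of "cmod z" e] 3
      by simp
  qed
qed

lemma trigonal_tetragonal_or_TI_obtain_rotz:
  assumes cls: "trigonal_tetragonal_or_TI G" and G: "G \<subseteq> O2"
  obtains th where "rotz th \<in> G" "cos (2 * th) \<noteq> 1"
proof -
  have rot: "\<exists>th. rotz th \<in> G \<and> cos (2 * th) \<noteq> 1"
    if K: "in_class G K" "rotz th0 \<in> K" and th0: "cos th0 = 0 \<or> cos th0 = - 1 / 2" for K th0
  proof -
    have "cos th0 \<noteq> -1"
      using th0 by auto
    then obtain th where "rotz th \<in> G" "cos th = cos th0"
      by (rule in_class_obtain_rotz[OF K G])
    moreover have "cos (2 * th) = 2 * cos th0 ^ 2 - 1"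
      using \<open>cos th = cos th0\<close> by (simp add: cos_double_cos)
    ultimately show ?thesis
      using th0 by (auto simp: power2_eq_square)
  qed
  have "rotz (2 * pi / 3) \<in> Dn 3"
    unfolding Dn_def by (rule UnI1, rule image_eqI[where x = 1]) simp_all
  moreover have "rotz (pi / 2) \<in> Dn 4"
    unfolding Dn_def by (rule UnI1, rule image_eqI[where x = 1]) simp_all
  moreover have "cos (2 * pi / 3) = - 1 / 2"
    using cos_120 by simp
  ultimately have "\<exists>th. rotz th \<in> G \<and> cos (2 * th) \<noteq> 1"
    using cls rot[of _ "2 * pi / 3"] rot[of _ "pi / 2"] rotz_in_O2[of "pi / 2"]
    unfolding trigonal_tetragonal_or_TI_def by auto
  thus thesis
    using that by blast
qed

lemma TI_z_invariants_of_rotz: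
  assumes H: "is_H4 H" and d: "rotz th \<in> stab2 (d2 H)" and Ht: "rotz th \<in> stab2 (ddot42 H t)"
    and th: "cos (2 * th) \<noteq> 1"
  shows "TI_z (d2 H)" and "TI_z (ddot42 H t)"
  using TI_z_of_rotz_fixed[OF is_Sym2_d2[OF H] _ th] TI_z_of_rotz_fixed[OF is_Sym2_ddot42[OF H] _ th] d Ht
  by (auto simp: stab2_def)

lemma invariants_TI_of_trigonal_tetragonal_or_TI:
  assumes H: "is_H4 H" and t: "stab2 t = O2" and cls: "trigonal_tetragonal_or_TI (stab4 H \<inter> O2)"
  shows "stab2 (d2 H) \<inter> O2 \<inter> stab2 (ddot42 H t) = O2"
proof -
  obtain th where th: "rotz th \<in> stab4 H \<inter> O2" "cos (2 * th) \<noteq> 1"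
    using trigonal_tetragonal_or_TI_obtain_rotz[OF cls] by blast
  have g: "orthogonal_matrix (rotz th)"
    by (rule SO3_orthogonal[OF rotz_SO3])
  have "act4 (rotz th) H = H" "act2 (rotz th) t = t"
    using th(1) t by (auto simp: stab4_def stab2_def)
  hence "rotz th \<in> stab2 (d2 H)" "rotz th \<in> stab2 (ddot42 H t)"
    using d2_act4[OF g, of H] ddot42_act[OF g, of H t] rotz_SO3 by (simp_all add: stab2_def)
  hence "O2 \<subseteq> stab2 (d2 H)" "O2 \<subseteq> stab2 (ddot42 H t)"
    using TI_z_invariants_of_rotz[OF H _ _ th(2)] O2_subset_stab2_TI_z by blast+
  thus ?thesis by blast
qed

lemma trigonal_tetragonal_or_TI_of_invariants_TI:
  assumes H: "is_H4 H" and t: "stab2 t = O2"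
    and cls: "in_class (stab2 (d2 H) \<inter> O2 \<inter> stab2 (ddot42 H t)) O2"
  shows "trigonal_tetragonal_or_TI (stab4 H \<inter> O2)"
proof -
  obtain th where th: "rotz th \<in> stab2 (d2 H) \<inter> O2 \<inter> stab2 (ddot42 H t)" "cos (2 * th) \<noteq> 1"
    using trigonal_tetragonal_or_TI_obtain_rotz[of "stab2 (d2 H) \<inter> O2 \<inter> stab2 (ddot42 H t)"] cls
    unfolding trigonal_tetragonal_or_TI_def by blast
  have d: "TI_z (d2 H)" and Ht: "TI_z (ddot42 H t)"
    using TI_z_invariants_of_rotz[OF H _ _ th(2)] th(1) by blast+
  define w where "w = Complex (4 * H 1 1 1 1 + 3 * H 1 1 3 3) (4 * H 1 1 1 2)"
  define z where "z = Complex (H 1 1 1 3) (H 1 1 2 3)"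
  have nf: "H = harmonic_nf w (H 1 1 3 3) z"
    unfolding w_def z_def by (rule harmonic_nf_of_TI_z[OF H TI_z_of_stab2_eq_O2[OF t] Ht])
  have "Complex (d2 H 1 3) (d2 H 2 3) = w * cnj z"
    using d2_harmonic_nf[of w "H 1 1 3 3" z] by (simp only: nf[symmetric])
  moreover have "Complex (d2 H 1 3) (d2 H 2 3) = 0"
    using d by (simp add: TI_z_def complex_eq_iff)
  ultimately have "w * cnj z = 0"
    by simp
  thus ?thesis
    by (subst nf) (rule trigonal_tetragonal_or_TI_harmonic_nf)
qed

lemma trigonal_tetragonal_or_TI_iff_invariants_TI:
  assumes "is_H4 H" and "stab2 t = O2"
  shows "trigonal_tetragonal_or_TI (stab4 H \<inter> O2)
           \<longleftrightarrow> in_class (stab2 (d2 H) \<inter> O2 \<inter> stab2 (ddot42 H t)) O2"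
  using invariants_TI_of_trigonal_tetragonal_or_TI[OF assms]
    trigonal_tetragonal_or_TI_of_invariants_TI[OF assms] in_class_refl by metis

theorem corollary9p9:
  fixes t :: tensor2 and H :: tensor4
  assumes "is_Sym2 t" and "in_class (stab2 t) O2" and "is_H4 H"
  shows "(in_class (stab4 H \<inter> stab2 t) (Dn 3) \<or> in_class (stab4 H \<inter> stab2 t) (Dn 4)
           \<or> in_class (stab4 H \<inter> stab2 t) O2)
         \<longleftrightarrow> in_class (stab2 (d2 H) \<inter> stab2 t \<inter> stab2 (ddot42 H t)) O2"
proof -
  obtain g where g: "g \<in> SO3" and tg: "stab2 t = conj_mat g ` O2"
    using assms(2) unfolding in_class_def by blast
  define t' where "t' = act2 (transpose g) t"
  define H' where "H' = act4 (transpose g) H"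
  have "g ** transpose g = mat 1"
    using SO3_orthogonal[OF g] by (simp add: orthogonal_matrix_def)
  hence t: "t = act2 g t'" and H: "H = act4 g H'"
    unfolding t'_def H'_def by (simp_all flip: act2_mult act4_mult add: act2_id act4_id)
  have inj: "inj (conj_mat g)"
    by (rule inj_conj_mat[OF g])
  have "stab2 t' = O2"
    using tg inj by (simp add: t stab2_act2[OF g] inj_image_eq_iff)
  moreover have "is_H4 H'"
    unfolding H'_def by (rule is_H4_act4[OF SO3_orthogonal[OF SO3_transpose[OF g]] assms(3)])
  moreover have "stab4 H \<inter> stab2 t = conj_mat g ` (stab4 H' \<inter> O2)"
    using tg inj by (simp add: H stab4_act4[OF g] image_Int)
  moreover have "stab2 (d2 H) \<inter> stab2 t \<inter> stab2 (ddot42 H t)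
      = conj_mat g ` (stab2 (d2 H') \<inter> O2 \<inter> stab2 (ddot42 H' t'))"
    using tg inj SO3_orthogonal[OF g]
    by (simp add: H t d2_act4 ddot42_act stab2_act2[OF g] image_Int)
  ultimately show ?thesis
    unfolding trigonal_tetragonal_or_TI_def[symmetric]
    by (simp add: trigonal_tetragonal_or_TI_conj_mat[OF g] in_class_conj_mat_image[OF g]
        trigonal_tetragonal_or_TI_iff_invariants_TI)
qed

end
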